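(* Let $\mathcal{R}^{rsc}$ be a rich single-crossing domain and $F:\mathcal{R}^{rsc}\to\mathbb{Z}$ a strategy-proof mechanism. Then $F$ is monotone: for all $R',R''\in\mathcal{R}^{rsc}$ with $R'\prec R''$, $F(R')\le F(R'')$ (i.e. either $F(R')=F(R'')$ or both coordinates of $F(R')$ are strictly smaller than those of $F(R'')$). The same holds for mechanisms defined on a closed interval $[\underline R,\overline R]\subseteq\mathcal{R}^{rsc}$.
   Context: $\mathbb{Z}=[0,\infty)\times[0,1]$; $(t',q')<(t'',q'')$ means $t'<t''$ and $q'<q''$, and $x\le y$ means $x=y$ or $x<y$; $\square(z)=\{x:x\le z\}$. A classical preference is a complete transitive relation $R$ on $\mathbb{Z}$ (strict part $P$, indifference $I$) strictly decreasing in $t$ for fixed $q$, strictly increasing in $q$ for fixed $t$, with closed upper and lower contour sets $UC(R,z)=\{x:xRz\}$, $LC(R,z)=\{x:zRx\}$. Distinct classical preferences satisfy single-crossing if any indifference set of one meets any indifference set of the other in at most one point. A rich single-crossing domain $\mathcal{R}^{rsc}$ is a set of pairwise single-crossing classical preferences such that for all $x'<x''$ some member is indifferent between $x'$ and $x''$. For distinct members, $R'\prec R''$ means $\square(z)\cap UC(R'',z)\subseteq\square(z)\cap UC(R',z)$ for all $z\in\mathbb{Z}$; $\prec$ is a linear order. A mechanism is a map $F$ from the domain to $\mathbb{Z}$; it is strategy-proof if $F(R')\,R'\,F(R'')$ for all $R',R''$ in the domain. *)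

theory Defs
  imports "HOL-Analysis.Analysis"
begin

type_synonym alloc = "real \<times> real"
type_synonym pref = "alloc rel"

definition ZZ :: "alloc set" where
  "ZZ = {(t, q). 0 \<le> t \<and> 0 \<le> q \<and> q \<le> 1}"

definition zlt :: "alloc \<Rightarrow> alloc \<Rightarrow> bool" where
  "zlt x y \<longleftrightarrow> fst x < fst y \<and> snd x < snd y"

definition zle :: "alloc \<Rightarrow> alloc \<Rightarrow> bool" where
  "zle x y \<longleftrightarrow> x = y \<or> zlt x y"

definition box :: "alloc \<Rightarrow> alloc set" where
  "box z = {x \<in> ZZ. zle x z}"

definition UC :: "pref \<Rightarrow> alloc \<Rightarrow> alloc set" where
  "UC R z = {x \<in> ZZ. (x, z) \<in> R}"

definition LC :: "pref \<Rightarrow> alloc \<Rightarrow> alloc set" where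
  "LC R z = {x \<in> ZZ. (z, x) \<in> R}"

definition strict :: "pref \<Rightarrow> alloc \<Rightarrow> alloc \<Rightarrow> bool" where
  "strict R x y \<longleftrightarrow> (x, y) \<in> R \<and> (y, x) \<notin> R"

definition indiff :: "pref \<Rightarrow> alloc \<Rightarrow> alloc \<Rightarrow> bool" where
  "indiff R x y \<longleftrightarrow> (x, y) \<in> R \<and> (y, x) \<in> R"

definition indiff_set :: "pref \<Rightarrow> alloc \<Rightarrow> alloc set" where
  "indiff_set R z = {x \<in> ZZ. indiff R x z}"

definition classical :: "pref \<Rightarrow> bool" where
  "classical R \<longleftrightarrow>
     R \<subseteq> ZZ \<times> ZZ \<and>
     (\<forall>x\<in>ZZ. \<forall>y\<in>ZZ. (x, y) \<in> R \<or> (y, x) \<in> R) \<and>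
     trans R \<and>
     (\<forall>t1 t2 q. (t1, q) \<in> ZZ \<and> (t2, q) \<in> ZZ \<and> t1 < t2 \<longrightarrow> strict R (t1, q) (t2, q)) \<and>
     (\<forall>t q1 q2. (t, q1) \<in> ZZ \<and> (t, q2) \<in> ZZ \<and> q1 < q2 \<longrightarrow> strict R (t, q2) (t, q1)) \<and>
     (\<forall>z\<in>ZZ. closed (UC R z) \<and> closed (LC R z))"

definition single_crossing :: "pref \<Rightarrow> pref \<Rightarrow> bool" where
  "single_crossing R1 R2 \<longleftrightarrow>
     (\<forall>z1\<in>ZZ. \<forall>z2\<in>ZZ. \<forall>x y. x \<in> indiff_set R1 z1 \<inter> indiff_set R2 z2 \<longrightarrow>
        y \<in> indiff_set R1 z1 \<inter> indiff_set R2 z2 \<longrightarrow> x = y)"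

definition rich_single_crossing :: "pref set \<Rightarrow> bool" where
  "rich_single_crossing D \<longleftrightarrow>
     (\<forall>R\<in>D. classical R) \<and>
     (\<forall>R1\<in>D. \<forall>R2\<in>D. R1 \<noteq> R2 \<longrightarrow> single_crossing R1 R2) \<and>
     (\<forall>x1\<in>ZZ. \<forall>x2\<in>ZZ. zlt x1 x2 \<longrightarrow> (\<exists>R\<in>D. indiff R x1 x2))"

definition pref_less :: "pref \<Rightarrow> pref \<Rightarrow> bool" where
  "pref_less R1 R2 \<longleftrightarrow> R1 \<noteq> R2 \<and>
     (\<forall>z\<in>ZZ. box z \<inter> UC R2 z \<subseteq> box z \<inter> UC R1 z)"

definition pref_interval :: "pref set \<Rightarrow> pref \<Rightarrow> pref \<Rightarrow> pref set" where
  "pref_interval D Rlo Rhi =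
     {R \<in> D. (R = Rlo \<or> pref_less Rlo R) \<and> (R = Rhi \<or> pref_less R Rhi)}"

definition mechanism :: "pref set \<Rightarrow> (pref \<Rightarrow> alloc) \<Rightarrow> bool" where
  "mechanism D F \<longleftrightarrow> (\<forall>R\<in>D. F R \<in> ZZ)"

definition strategy_proof :: "pref set \<Rightarrow> (pref \<Rightarrow> alloc) \<Rightarrow> bool" where
  "strategy_proof D F \<longleftrightarrow> (\<forall>R1\<in>D. \<forall>R2\<in>D. (F R1, F R2) \<in> R1)"

definition monotone_mech :: "pref set \<Rightarrow> (pref \<Rightarrow> alloc) \<Rightarrow> bool" where
  "monotone_mech D F \<longleftrightarrow>
     (\<forall>R1\<in>D. \<forall>R2\<in>D. pref_less R1 R2 \<longrightarrow> zle (F R1) (F R2))"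

end

theory Submission
  imports Defs
begin

text \<open>Let \<open>x = F R'\<close>, \<open>y = F R''\<close> with \<open>R' \<prec> R''\<close>; strategy-proofness gives \<open>x R' y\<close> and
  \<open>y R'' x\<close>. If one bundle weakly dominates the other, monotonicity of classical preferences
  contradicts one of these. Otherwise either \<open>x \<le> y\<close> or \<open>y < x\<close>. In the latter case \<open>y\<close> lies
  in \<open>\<box>(x)\<close>, so \<open>y R'' x\<close> transfers to \<open>y R' x\<close>. If also \<open>x R'' y\<close>, then \<open>x\<close> and \<open>y\<close> are two
  common points of the indifference sets of \<open>R'\<close> and \<open>R''\<close> through \<open>x\<close>, violating single
  crossing. If \<open>y P'' x\<close>, closedness of lower contour sets lets us raise the payment of \<open>y\<close>
  slightly to \<open>y'\<close> with \<open>y' P'' x\<close> still; then \<open>y' R' x R' y\<close>, contradicting \<open>y P' y'\<close>.\<close>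

lemma classical_total:
  "classical R \<Longrightarrow> x \<in> ZZ \<Longrightarrow> y \<in> ZZ \<Longrightarrow> (x, y) \<in> R \<or> (y, x) \<in> R"
  by (simp add: classical_def)

lemma classical_refl: "classical R \<Longrightarrow> x \<in> ZZ \<Longrightarrow> (x, x) \<in> R"
  using classical_total by blast

lemma classical_trans: "classical R \<Longrightarrow> trans R"
  by (simp add: classical_def)

lemma classical_strict_payment:
  "classical R \<Longrightarrow> (t1, q) \<in> ZZ \<Longrightarrow> (t2, q) \<in> ZZ \<Longrightarrow> t1 < t2 \<Longrightarrow> strict R (t1, q) (t2, q)"
  by (simp add: classical_def)

lemma classical_strict_quantity:
  "classical R \<Longrightarrow> (t, q1) \<in> ZZ \<Longrightarrow> (t, q2) \<in> ZZ \<Longrightarrow> q1 < q2 \<Longrightarrow> strict R (t, q2) (t, q1)"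
  by (simp add: classical_def)

lemma classical_dominated_not_preferred:
  assumes c: "classical R" and a: "a \<in> ZZ" and b: "b \<in> ZZ"
    and le: "fst a \<le> fst b" "snd b \<le> snd a" and ne: "a \<noteq> b"
  shows "(b, a) \<notin> R"
proof
  assume ba: "(b, a) \<in> R"
  obtain ta qa tb qb where A: "a = (ta, qa)" and B: "b = (tb, qb)" by fastforce
  have corner: "(ta, qb) \<in> ZZ" using a b A B by (auto simp: ZZ_def)
  have corner_b: "((ta, qb), b) \<in> R"
  proof (cases "ta < tb")
    case True
    then show ?thesis using classical_strict_payment[OF c corner] b B by (simp add: strict_def)
  next
    case False
    then show ?thesis using le A B classical_refl[OF c b] by simp
  qed
  show False
  proof (cases "qb < qa")
    case True
    have "((ta, qb), a) \<in> R"
      using corner_b ba classical_trans[OF c] by (meson transD)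
    then show False
      using classical_strict_quantity[OF c corner] a A True by (simp add: strict_def)
  next
    case False
    with le ne A B have "qa = qb" "ta < tb" by auto
    then have "strict R a b" using classical_strict_payment[OF c] a b A B by simp
    with ba show False by (simp add: strict_def)
  qed
qed

text \<open>Closedness of the lower contour set \<open>LC R x\<close> is what makes strict preference stable
  under small increases of the payment.\<close>

lemma classical_strict_pref_raise_payment:
  assumes c: "classical R" and x: "x \<in> ZZ" and y: "(t, q) \<in> ZZ"
    and not_pref: "(x, (t, q)) \<notin> R" and bound: "t < s"
  obtains t' where "t < t'" "t' < s" "(t', q) \<in> ZZ" "((t', q), x) \<in> R"
proof -
  have "closed (LC R x)" using c x by (simp add: classical_def)
  moreover have "(t, q) \<notin> LC R x" using not_pref by (simp add: LC_def)
  ultimately obtain e where e: "e > 0" "\<And>z. dist z (t, q) < e \<Longrightarrow> z \<notin> LC R x"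
    unfolding closed_def open_dist by (metis Compl_iff dist_commute)
  define t' where "t' = t + min (e / 2) ((s - t) / 2)"
  have t': "t < t'" "t' < s" "dist (t', q) (t, q) < e"
    using e(1) bound by (auto simp: t'_def dist_Pair_Pair dist_real_def min_def field_simps)
  have Z: "(t', q) \<in> ZZ" using y t'(1) by (auto simp: ZZ_def)
  have "(x, (t', q)) \<notin> R" using e(2)[OF t'(3)] Z by (simp add: LC_def)
  then have "((t', q), x) \<in> R" using classical_total[OF c x Z] by blast
  with t' Z show thesis by (intro that)
qed

lemma pref_less_transfer_upper:
  assumes "pref_less R1 R2" "x \<in> ZZ" "y \<in> ZZ" "zlt y x" "(y, x) \<in> R2"
  shows "(y, x) \<in> R1"
  using assms by (auto simp: pref_less_def box_def zle_def UC_def)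

lemma single_crossing_indiff_unique:
  assumes "single_crossing R1 R2" "x \<in> ZZ" "y \<in> ZZ"
    and "indiff R1 x x" "indiff R2 x x" "indiff R1 y x" "indiff R2 y x"
  shows "y = x"
  using assms unfolding single_crossing_def indiff_set_def by blast

lemma zle_or_dominated:
  obtains "zle x y" | "zlt y x"
  | "fst x \<le> fst y" "snd y \<le> snd x" "x \<noteq> y"
  | "fst y \<le> fst x" "snd x \<le> snd y" "x \<noteq> y"
  unfolding zle_def zlt_def by (metis linorder_not_le order_less_imp_le prod_eq_iff)

lemma single_crossing_revealed_pref_zle:
  assumes c1: "classical R1" and c2: "classical R2" and sc: "single_crossing R1 R2"
    and less: "pref_less R1 R2" and x: "x \<in> ZZ" and y: "y \<in> ZZ"
    and xy: "(x, y) \<in> R1" and yx: "(y, x) \<in> R2"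
  shows "zle x y"
proof (cases x y rule: zle_or_dominated)
  case 2
  have yx1: "(y, x) \<in> R1" using pref_less_transfer_upper[OF less x y 2 yx] .
  show ?thesis
  proof (cases "(x, y) \<in> R2")
    case True
    have "y = x"
      using single_crossing_indiff_unique[OF sc x y] classical_refl[OF c1 x]
        classical_refl[OF c2 x] xy yx1 True yx by (simp add: indiff_def)
    then show ?thesis by (simp add: zle_def)
  next
    case False
    obtain t q where Y: "y = (t, q)" by fastforce
    from 2 Y have "t < fst x" by (simp add: zlt_def)
    with classical_strict_pref_raise_payment[OF c2 x] False y Y
    obtain t' where t': "t < t'" "t' < fst x" "(t', q) \<in> ZZ" "((t', q), x) \<in> R2"
      by metis
    have "zlt (t', q) x" using 2 Y t'(2) by (simp add: zlt_def)
    then have "((t', q), x) \<in> R1" using pref_less_transfer_upper[OF less x t'(3)] t'(4) by blast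
    then have "((t', q), y) \<in> R1" using xy classical_trans[OF c1] by (meson transD)
    moreover have "strict R1 y (t', q)" using classical_strict_payment[OF c1] y t' Y by simp
    ultimately show ?thesis by (simp add: strict_def)
  qed
next
  case 3
  then show ?thesis using classical_dominated_not_preferred[OF c2 x y] yx by blast
next
  case 4
  then show ?thesis using classical_dominated_not_preferred[OF c1 y x] xy by blast
qed

lemma strategy_proof_monotone_on_subdomain:
  assumes rsc: "rich_single_crossing D" and sub: "D' \<subseteq> D"
    and mech: "mechanism D' F" and sp: "strategy_proof D' F"
  shows "monotone_mech D' F"
  unfolding monotone_mech_def
proof (intro ballI impI)
  fix R1 R2 assume R: "R1 \<in> D'" "R2 \<in> D'" and less: "pref_less R1 R2"
  have "R1 \<noteq> R2" using less by (simp add: pref_less_def)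
  moreover have "\<forall>R\<in>D. classical R" "\<forall>R1\<in>D. \<forall>R2\<in>D. R1 \<noteq> R2 \<longrightarrow> single_crossing R1 R2"
    using rsc by (simp_all add: rich_single_crossing_def)
  ultimately have "classical R1" "classical R2" "single_crossing R1 R2"
    using sub R by auto
  then show "zle (F R1) (F R2)"
    using single_crossing_revealed_pref_zle less mech sp R
    by (auto simp: mechanism_def strategy_proof_def)
qed

theorem mainTheorem4:
  fixes D :: "pref set"
  assumes "rich_single_crossing D"
  shows "(\<forall>F. mechanism D F \<and> strategy_proof D F \<longrightarrow> monotone_mech D F) \<and>
         (\<forall>Rlo Rhi F. Rlo \<in> D \<and> Rhi \<in> D \<and> (Rlo = Rhi \<or> pref_less Rlo Rhi) \<and>
            mechanism (pref_interval D Rlo Rhi) F \<and> strategy_proof (pref_interval D Rlo Rhi) F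
            \<longrightarrow> monotone_mech (pref_interval D Rlo Rhi) F)"
proof -
  have "pref_interval D Rlo Rhi \<subseteq> D" for Rlo Rhi by (auto simp: pref_interval_def)
  then show ?thesis using strategy_proof_monotone_on_subdomain[OF assms] by blast
qed

end
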